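(* Let $q\geq 3$ be odd, $x\in(0,1)$, and $\varepsilon>0$ with $V_\varepsilon:=(x-\varepsilon/2,x+\varepsilon/2)\subseteq(0,1)$. (i) For all $n\in\mathbb{N}$ and all $h\in W_{q,n}$, \[ \Big|\frac{m(h.V_\varepsilon)}{\mu(V_\varepsilon)}-x|h'(x)|\Big|\leq\Big(\Big|\frac{\varepsilon}{\mu(V_\varepsilon)}-x\Big|+\frac{\varepsilon}{x}\Big)\frac{m(h.V_\varepsilon)}{\varepsilon}. \] (ii) There exists $M>0$ (depending only on $x$, $\varepsilon$, $q$) such that for all $y\in(0,1]$, all $n\in\mathbb{N}$ and all $h\in W_{q,n}$ with $y\in h.V_\varepsilon$, \[ \Big|\frac{m(h.V_\varepsilon\cap(0,y])}{\mu(V_\varepsilon)}-x|h'(x)|\,\delta_{h.x}((0,y])\Big|\leq\frac{M}{n^2}. \]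
   Context: Let $\lambda=2\cos(\pi/q)$. Elements of $\mathrm{PGL}_2(\mathbb{R})$ are written as matrices (up to nonzero scalar) and act on $\mathbb{R}\cup\{\infty\}$ by $\begin{bmatrix}a&b\\c&d\end{bmatrix}.x=(ax+b)/(cx+d)$. Put $s(x)=\sin(x\pi/q)/\sin(\pi/q)$, $g_k=\begin{bmatrix}s(k)&-s(k+1)\\-s(k-1)&s(k)\end{bmatrix}$, $Q=\begin{bmatrix}0&1\\1&0\end{bmatrix}$, $K=\{(q+1)/2,\dots,q-1\}$, $\Lambda_q=\{g_k^{-1},(Qg_k)^{-1}:k\in K\}$; $W_{q,n}$ denotes the set of words of length $n$ over $\Lambda_q$ (products of $n$ elements of $\Lambda_q$ in the free semigroup they generate). For $h\in\mathrm{PGL}_2(\mathbb{R})$, $h'$ is the derivative of $x\mapsto h.x$, and $h.V$ is the image of a set $V$. $m$ is Lebesgue measure, $\mu$ the measure with density $1/t$ with respect to $m$ (so $\mu(V_\varepsilon)=\log\frac{x+\varepsilon/2}{x-\varepsilon/2}$), and $\delta_z$ the Dirac measure at $z$. *)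

theory Defs
  imports "HOL-Analysis.Analysis"
begin

text \<open>2x2 real matrices (representatives of elements of PGL_2(R)).\<close>
definition mat2 :: "real \<Rightarrow> real \<Rightarrow> real \<Rightarrow> real \<Rightarrow> real^2^2" where
  "mat2 a b c d = vector [vector [a, b], vector [c, d]]"

definition mob :: "real^2^2 \<Rightarrow> real \<Rightarrow> real" where
  "mob A t = (A$1$1 * t + A$1$2) / (A$2$1 * t + A$2$2)"

definition sq :: "nat \<Rightarrow> real \<Rightarrow> real" where
  "sq q t = sin (t * pi / real q) / sin (pi / real q)"

definition gk :: "nat \<Rightarrow> nat \<Rightarrow> real^2^2" where
  "gk q k = mat2 (sq q (real k)) (- sq q (real k + 1)) (- sq q (real k - 1)) (sq q (real k))"

definition Qm :: "real^2^2" where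
  "Qm = mat2 0 1 1 0"

definition Kset :: "nat \<Rightarrow> nat set" where
  "Kset q = {(q + 1) div 2 .. q - 1}"

definition Lambda_q :: "nat \<Rightarrow> (real^2^2) set" where
  "Lambda_q q = {matrix_inv (gk q k) | k. k \<in> Kset q} \<union> {matrix_inv (Qm ** gk q k) | k. k \<in> Kset q}"

definition W :: "nat \<Rightarrow> nat \<Rightarrow> (real^2^2) set" where
  "W q n = {foldr (**) ws (mat 1) | ws. length ws = n \<and> set ws \<subseteq> Lambda_q q}"

definition mu :: "real measure" where
  "mu = density lborel (\<lambda>t. ennreal (indicator {0<..} t / t))"

end

theory Submission
  imports Defs
begin

text \<open>The generators in \<open>\<Lambda>\<^sub>q\<close> are the inverses of \<open>g\<^sub>k\<close> and \<open>Q g\<^sub>k\<close>; by the identity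
\<open>s(k)\<^sup>2 - s(k+1) s(k-1) = 1\<close> these are matrices with nonnegative entries, bottom row at
least \<open>(1, 1)\<close> and determinant \<open>\<plusminus>1\<close>. Hence a word \<open>h = [a b; c d]\<close> of length \<open>n\<close> has
\<open>c \<ge> 0\<close>, \<open>d \<ge> 1\<close>, \<open>c + d \<ge> n + 1\<close> and \<open>|ad - bc| = 1\<close>. On \<open>[0, 1]\<close> such \<open>h\<close> is monotone with
\<open>|h'(t)| = 1/(ct + d)\<^sup>2\<close>, so \<open>m(h.V\<^sub>\<epsilon>) = \<epsilon>/(PR)\<close> with \<open>P, R = c(x \<mp> \<epsilon>/2) + d\<close>, while
\<open>PR = (cx + d)\<^sup>2 - (c\<epsilon>/2)\<^sup>2\<close>; comparing \<open>1/(PR)\<close> with \<open>1/(cx + d)\<^sup>2\<close> gives (i). For (ii) both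
\<open>m(h.V\<^sub>\<epsilon>)\<close> and \<open>x|h'(x)|\<close> are \<open>O(1/(c + d)\<^sup>2) = O(1/n\<^sup>2)\<close>.\<close>

lemma mat2_nth [simp]:
  "mat2 a b c d $ 1 $ 1 = a" "mat2 a b c d $ 1 $ 2 = b"
  "mat2 a b c d $ 2 $ 1 = c" "mat2 a b c d $ 2 $ 2 = d"
  by (simp_all add: mat2_def)

lemma mat2_mult:
  "mat2 a b c d ** mat2 a' b' c' d' = mat2 (a * a' + b * c') (a * b' + b * d') (c * a' + d * c') (c * b' + d * d')"
  by (simp add: vec_eq_iff forall_2 matrix_matrix_mult_def sum_2)

lemma mat_1_eq_mat2: "(mat 1 :: real^2^2) = mat2 1 0 0 1"
  by (simp add: vec_eq_iff forall_2 mat_def)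

lemma matrix_inv_eqI:
  fixes A B :: "real^2^2"
  assumes "A ** B = mat 1" "B ** A = mat 1"
  shows "matrix_inv A = B"
proof -
  define C where "C = matrix_inv A"
  have C: "A ** C = mat 1 \<and> C ** A = mat 1"
    unfolding C_def matrix_inv_def by (rule someI[of _ B]) (use assms in blast)
  have "C = C ** (A ** B)" using assms by (simp add: matrix_mul_rid)
  also have "\<dots> = B" using C by (simp add: matrix_mul_assoc matrix_mul_lid)
  finally show ?thesis unfolding C_def .
qed

lemma matrix_inv_mat2:
  assumes "a * d - b * c = D" "D \<noteq> 0"
  shows "matrix_inv (mat2 a b c d) = mat2 (d/D) (-b/D) (-c/D) (a/D)"
  by (rule matrix_inv_eqI) (use assms in \<open>auto simp: mat2_mult mat_1_eq_mat2 field_simps\<close>)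

lemma foldr_matrix_mul_right: "foldr (**) xs (B::real^2^2) = foldr (**) xs (mat 1) ** B"
  by (induction xs) (auto simp: matrix_mul_lid matrix_mul_assoc)

lemma mob_mat2: "mob (mat2 a b c d) = (\<lambda>t. (a * t + b) / (c * t + d))"
  by (simp add: mob_def fun_eq_iff)

lemma sin_pi_div_pos: "1 < q \<Longrightarrow> 0 < sin (pi / real q)"
  by (rule sin_gt_zero) (auto simp: field_simps)

lemma sq_nonneg:
  assumes "1 < q" "j \<le> q"
  shows "0 \<le> sq q (real j)"
proof -
  have "0 \<le> sin (real j * pi / real q)"
    using assms by (intro sin_ge_zero) (auto simp: field_simps)
  thus ?thesis using sin_pi_div_pos[OF assms(1)] by (simp add: sq_def)
qed

lemma sq_ge_1:
  assumes "2 \<le> q" "1 \<le> j" "j \<le> q - 1"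
  shows "1 \<le> sq q (real j)"
proof -
  define th where "th = pi / real q"
  have th: "0 < th" "th \<le> pi/2" "real q * th = pi" using assms(1) by (auto simp: th_def field_simps)
  obtain i where i: "1 \<le> i" "real i * th \<le> pi/2" "sin (real i * th) = sin (real j * th)"
  proof (cases "real j * th \<le> pi/2")
    case True thus ?thesis using assms that by blast
  next
    case False
    have "real j * th = pi - real (q - j) * th" using assms th by (simp add: of_nat_diff algebra_simps)
    thus ?thesis using False assms by (intro that[of "q - j"]) auto
  qed
  have "th \<le> real i * th" using i th by (simp add: mult_le_cancel_right1)
  hence "sin th \<le> sin (real i * th)" using i th by (intro sin_monotone_2pi_le) auto
  thus ?thesis using i(3) th sin_pi_div_pos[of q] assms by (simp add: sq_def th_def)
qed

lemma sq_power2_minus_neighbours: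
  assumes "1 < q"
  shows "sq q t ^ 2 - sq q (t + 1) * sq q (t - 1) = 1"
proof -
  define A B where "A = t * pi / real q" and "B = pi / real q"
  have "(t + 1) * pi / real q = A + B" "(t - 1) * pi / real q = A - B"
    by (simp_all add: A_def B_def add_divide_distrib diff_divide_distrib ring_distribs)
  have "sin (A + B) * sin (A - B) = (sin A * cos B)^2 - (cos A * sin B)^2"
    by (simp add: sin_add sin_diff power2_eq_square algebra_simps)
  also have "\<dots> = sin A ^ 2 - sin B ^ 2"
    by (simp add: power_mult_distrib cos_squared_eq algebra_simps)
  finally have "sin (A + B) * sin (A - B) = sin A ^ 2 - sin B ^ 2" .
  moreover have "sin B \<noteq> 0" using sin_pi_div_pos[OF assms] by (simp add: B_def)
  ultimately show ?thesis unfolding sq_def \<open>(t + 1) * pi / real q = A + B\<close> \<open>(t - 1) * pi / real q = A - B\<close>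
      A_def[symmetric] B_def[symmetric]
    by (simp add: field_simps power2_eq_square)
qed

lemma matrix_inv_gk:
  assumes "1 < q"
  shows "matrix_inv (gk q k) = mat2 (sq q (real k)) (sq q (real k + 1)) (sq q (real k - 1)) (sq q (real k))"
  using sq_power2_minus_neighbours[OF assms, of k]
  by (simp add: gk_def matrix_inv_mat2[where D = 1] power2_eq_square)

lemma matrix_inv_Qm_gk:
  assumes "1 < q"
  shows "matrix_inv (Qm ** gk q k) = mat2 (sq q (real k + 1)) (sq q (real k)) (sq q (real k)) (sq q (real k - 1))"
proof -
  have "Qm ** gk q k = mat2 (- sq q (real k - 1)) (sq q (real k)) (sq q (real k)) (- sq q (real k + 1))"
    by (simp add: gk_def Qm_def mat2_mult)
  moreover have "(- sq q (real k - 1)) * (- sq q (real k + 1)) - sq q (real k) * sq q (real k) = -1"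
    using sq_power2_minus_neighbours[OF assms, of k] by (simp add: power2_eq_square mult.commute)
  ultimately show ?thesis by (simp add: matrix_inv_mat2)
qed

definition generator_shape :: "real^2^2 \<Rightarrow> bool" where
  "generator_shape w \<longleftrightarrow> (\<exists>a b c d. w = mat2 a b c d \<and> 0 \<le> a \<and> 0 \<le> b \<and> 1 \<le> c \<and> 1 \<le> d
     \<and> 1 \<le> a + b \<and> \<bar>a * d - b * c\<bar> = 1)"

lemma Lambda_q_generator_shape:
  assumes "3 \<le> q" "w \<in> Lambda_q q"
  shows "generator_shape w"
proof -
  obtain k where k: "k \<in> Kset q" and w: "w = matrix_inv (gk q k) \<or> w = matrix_inv (Qm ** gk q k)"
    using assms(2) unfolding Lambda_q_def by blast
  have k2: "2 \<le> k" "k \<le> q - 1" using k assms(1) by (auto simp: Kset_def)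
  define s0 s1 s2 where "s0 = sq q (real k - 1)" and "s1 = sq q (real k)" and "s2 = sq q (real k + 1)"
  have "real k - 1 = real (k - 1)" "real k + 1 = real (k + 1)" using k2 by auto
  hence s: "1 \<le> s0" "1 \<le> s1" "0 \<le> s2"
    unfolding s0_def s1_def s2_def using k2 assms(1)
    by (simp_all only:) (intro sq_ge_1 sq_nonneg; simp)+
  have "s1 * s1 - s2 * s0 = 1"
    using sq_power2_minus_neighbours[of q k] assms(1) by (simp add: s0_def s1_def s2_def power2_eq_square)
  hence "\<bar>s1 * s1 - s2 * s0\<bar> = 1" "\<bar>s2 * s0 - s1 * s1\<bar> = 1" by simp_all
  moreover have "w = mat2 s1 s2 s0 s1 \<or> w = mat2 s2 s1 s1 s0"
    using w assms(1) by (simp add: matrix_inv_gk matrix_inv_Qm_gk s0_def s1_def s2_def)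
  ultimately show ?thesis using s unfolding generator_shape_def by fastforce
qed

definition word_shape :: "nat \<Rightarrow> real^2^2 \<Rightarrow> bool" where
  "word_shape n h \<longleftrightarrow> (\<exists>a b c d. h = mat2 a b c d \<and> 0 \<le> c \<and> 1 \<le> d \<and> real n + 1 \<le> c + d
     \<and> \<bar>a * d - b * c\<bar> = 1)"

lemma word_shape_0: "word_shape 0 (mat 1)"
  unfolding word_shape_def mat_1_eq_mat2 by force

lemma word_shape_mult_generator_shape:
  assumes "word_shape n h" "generator_shape w"
  shows "word_shape (Suc n) (h ** w)"
proof -
  obtain a b c d where h: "h = mat2 a b c d" "0 \<le> c" "1 \<le> d" "real n + 1 \<le> c + d" "\<bar>a * d - b * c\<bar> = 1"
    using assms(1) unfolding word_shape_def by blast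
  obtain a' b' c' d' where w: "w = mat2 a' b' c' d'" "0 \<le> a'" "0 \<le> b'" "1 \<le> c'" "1 \<le> d'"
    "1 \<le> a' + b'" "\<bar>a' * d' - b' * c'\<bar> = 1"
    using assms(2) unfolding generator_shape_def by blast
  have "c * 1 \<le> c * (a' + b')" "d * 2 \<le> d * (c' + d')" "1 * 1 \<le> d * d'"
    using h w by (intro mult_mono; simp)+
  hence "real (Suc n) + 1 \<le> (c * a' + d * c') + (c * b' + d * d')" "1 \<le> c * b' + d * d'" "0 \<le> c * a' + d * c'"
    using h w by (simp_all add: algebra_simps add_increasing)
  moreover have "(a * a' + b * c') * (c * b' + d * d') - (a * b' + b * d') * (c * a' + d * c') = (a * d - b * c) * (a' * d' - b' * c')"
    by (simp add: algebra_simps)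
  ultimately show ?thesis unfolding word_shape_def h w mat2_mult
    by (intro exI[of _ "a * a' + b * c'"] exI[of _ "a * b' + b * d'"] exI[of _ "c * a' + d * c'"] exI[of _ "c * b' + d * d'"])
      (use h w in \<open>simp add: abs_mult\<close>)
qed

lemma W_word_shape:
  assumes "3 \<le> q" "h \<in> W q n"
  shows "word_shape n h"
proof -
  obtain ws where ws: "h = foldr (**) ws (mat 1)" "length ws = n" "set ws \<subseteq> Lambda_q q"
    using assms(2) unfolding W_def by blast
  have "word_shape (length ws) (foldr (**) ws (mat 1))" if "set ws \<subseteq> Lambda_q q" for ws
    using that
  proof (induction ws rule: rev_induct)
    case Nil show ?case by (simp add: word_shape_0)
  next
    case (snoc w ws)
    thus ?case using Lambda_q_generator_shape[OF assms(1)] word_shape_mult_generator_shape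
      by (simp add: foldr_matrix_mul_right[of ws w])
  qed
  thus ?thesis using ws by blast
qed

lemma continuous_increasing_image_Ioo:
  fixes f :: "real \<Rightarrow> real"
  assumes "u < v" "continuous_on {u..v} f" "\<And>s t. u \<le> s \<Longrightarrow> s < t \<Longrightarrow> t \<le> v \<Longrightarrow> f s < f t"
  shows "f ` {u<..<v} = {f u<..<f v}"
proof
  show "f ` {u<..<v} \<subseteq> {f u<..<f v}" using assms(3) by fastforce
  show "{f u<..<f v} \<subseteq> f ` {u<..<v}"
  proof
    fix y assume y: "y \<in> {f u<..<f v}"
    then obtain t where "u \<le> t" "t \<le> v" "f t = y" using IVT'[of f u y v] assms(1,2) by auto
    moreover from this y have "t \<noteq> u" "t \<noteq> v" by auto
    ultimately show "y \<in> f ` {u<..<v}" by force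
  qed
qed

lemma continuous_decreasing_image_Ioo:
  fixes f :: "real \<Rightarrow> real"
  assumes "u < v" "continuous_on {u..v} f" "\<And>s t. u \<le> s \<Longrightarrow> s < t \<Longrightarrow> t \<le> v \<Longrightarrow> f t < f s"
  shows "f ` {u<..<v} = {f v<..<f u}"
proof
  show "f ` {u<..<v} \<subseteq> {f v<..<f u}" using assms(3) by fastforce
  show "{f v<..<f u} \<subseteq> f ` {u<..<v}"
  proof
    fix y assume y: "y \<in> {f v<..<f u}"
    then obtain t where "u \<le> t" "t \<le> v" "f t = y" using IVT2'[of f v y u] assms(1,2) by auto
    moreover from this y have "t \<noteq> u" "t \<noteq> v" by auto
    ultimately show "y \<in> f ` {u<..<v}" by force
  qed
qed

lemma mobius_diff:
  fixes a b c d s t :: real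
  assumes "c * s + d \<noteq> 0" "c * t + d \<noteq> 0"
  shows "(a * t + b) / (c * t + d) - (a * s + b) / (c * s + d) = (a * d - b * c) * (t - s) / ((c * s + d) * (c * t + d))"
  using assms by (simp add: diff_frac_eq algebra_simps)

lemma mobius_image_Ioo:
  fixes a b c d u v :: real
  assumes "u < v" "0 < c * u + d" "0 < c * v + d" "a * d - b * c \<noteq> 0"
  obtains l r where "(\<lambda>t. (a * t + b) / (c * t + d)) ` {u<..<v} = {l<..<r}"
    "r - l = \<bar>a * d - b * c\<bar> * (v - u) / ((c * u + d) * (c * v + d))"
proof -
  define f where "f = (\<lambda>t. (a * t + b) / (c * t + d))"
  define D where "D = a * d - b * c"
  have pos: "0 < c * t + d" if "u \<le> t" "t \<le> v" for t
    using assms(2,3) that mult_left_mono[of u t c] mult_left_mono_neg[of t v c] by (smt (verit))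
  have cont: "continuous_on {u..v} f"
    unfolding f_def using pos by (intro continuous_intros) (auto simp: less_imp_neq[symmetric])
  have step: "f t - f s = D * ((t - s) / ((c * s + d) * (c * t + d)))"
    "0 < (t - s) / ((c * s + d) * (c * t + d))" if "u \<le> s" "s < t" "t \<le> v" for s t
    unfolding f_def D_def using pos that by (auto simp: mobius_diff less_imp_neq[symmetric])
  show ?thesis
  proof (cases "0 < D")
    case True
    have "f ` {u<..<v} = {f u<..<f v}"
      using step True by (intro continuous_increasing_image_Ioo[OF assms(1) cont]) (smt (verit) mult_pos_pos)
    thus ?thesis using that step(1)[of u v] True assms(1) unfolding f_def D_def by simp
  next
    case False
    hence "D < 0" using assms(4) by (simp add: D_def)
    have "f ` {u<..<v} = {f v<..<f u}"
      using step \<open>D < 0\<close> by (intro continuous_decreasing_image_Ioo[OF assms(1) cont]) (smt (verit) mult_neg_pos)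
    moreover have "f u - f v = \<bar>D\<bar> * (v - u) / ((c * u + d) * (c * v + d))"
      using step(1)[OF order_refl assms(1) order_refl] \<open>D < 0\<close>
      by (simp only: abs_of_neg times_divide_eq_right mult_minus_left minus_divide_left)
    ultimately show ?thesis using that unfolding f_def D_def by blast
  qed
qed

lemma deriv_mobius:
  fixes a b c d x :: real
  assumes "c * x + d \<noteq> 0"
  shows "deriv (\<lambda>t. (a * t + b) / (c * t + d)) x = (a * d - b * c) / (c * x + d)^2"
  by (rule DERIV_imp_deriv)
    (use assms in \<open>auto intro!: derivative_eq_intros simp: field_simps power2_eq_square\<close>)

lemma nn_integral_inverse_Icc:
  assumes "0 < a" "a \<le> b"
  shows "(\<integral>\<^sup>+t. ennreal (1 / t) * indicator {a..b} t \<partial>lborel) = ennreal (ln b - ln a)"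
proof (rule nn_integral_has_integral_lebesgue')
  show "((\<lambda>t. 1 / t) has_integral (ln b - ln a)) {a..b}"
    using assms by (intro fundamental_theorem_of_calculus)
      (auto intro!: derivative_eq_intros simp: has_real_derivative_iff_has_vector_derivative[symmetric])
qed (use assms in auto)

lemma emeasure_mu_Ioo_0:
  assumes "0 < v"
  shows "emeasure mu {0<..<v} = \<infinity>"
proof -
  have mu_Ioo: "emeasure mu {0<..<v} = (\<integral>\<^sup>+t. ennreal (indicator {0<..} t / t) * indicator {0<..<v} t \<partial>lborel)"
    unfolding mu_def by (rule emeasure_density) auto
  define w where "w = v / 2"
  have w: "0 < w" using assms by (simp add: w_def)
  have lower: "ennreal (ln w - ln s) \<le> emeasure mu {0<..<v}" if "0 < s" "s \<le> w" for s
  proof -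
    have "ennreal (ln w - ln s) = (\<integral>\<^sup>+t. ennreal (1 / t) * indicator {s..w} t \<partial>lborel)"
      using that by (simp add: nn_integral_inverse_Icc)
    also have "\<dots> \<le> emeasure mu {0<..<v}"
      unfolding mu_Ioo using that assms by (intro nn_integral_mono) (auto simp: w_def indicator_def)
    finally show ?thesis .
  qed
  have unbounded: "ennreal r \<le> emeasure mu {0<..<v}" if "0 \<le> r" for r
  proof -
    have "w * exp (- r) \<le> w * 1" using w that by (intro mult_left_mono) auto
    moreover have "ln w - ln (w * exp (- r)) = r" using w by (simp add: ln_mult)
    ultimately show ?thesis using w lower[of "w * exp (- r)"] by simp
  qed
  show ?thesis
  proof (rule ccontr)
    assume "emeasure mu {0<..<v} \<noteq> \<infinity>"
    then obtain r where "emeasure mu {0<..<v} = ennreal r" "0 \<le> r"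
      by (cases "emeasure mu {0<..<v}" rule: ennreal_cases) auto
    with unbounded[of "r + 1"] show False by (simp add: ennreal_le_iff)
  qed
qed

lemma measure_mu_Ioo_0: "0 < v \<Longrightarrow> measure mu {0<..<v} = 0"
  by (simp add: measure_def emeasure_mu_Ioo_0)

lemma chord_tangent_estimate:
  fixes c d x e k :: real
  assumes c: "0 \<le> c" and d: "1 \<le> d" and x: "0 < x" and e: "0 < e" "e \<le> 2 * x" "e \<le> 2"
  defines "P \<equiv> c * (x - e/2) + d" and "R \<equiv> c * (x + e/2) + d" and "X \<equiv> c * x + d"
  shows "\<bar>k / (P * R) - x / X^2\<bar> \<le> (\<bar>k - x\<bar> + e / x) / (P * R)"
proof -
  have "0 \<le> c * (x - e/2)" "0 \<le> c * x" "0 \<le> c * (x + e/2)" using c x e by simp_all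
  hence "0 < P" "0 < X" "0 < R" unfolding P_def X_def R_def using d by linarith+
  hence PR: "0 < P * R" by simp
  have "x^2 * (c * e / 2)^2 = (c * x)^2 * (e^2 / 4)" by (simp add: power2_eq_square)
  also have "\<dots> \<le> X^2 * e"
  proof (rule mult_mono)
    show "(c * x)^2 \<le> X^2" using c d x unfolding X_def by (intro power_mono) auto
    show "e^2 / 4 \<le> e" using e by (simp add: power2_eq_square)
  qed auto
  finally have key: "x^2 * (c * e / 2)^2 \<le> X^2 * e" .
  have "P * R = X^2 - (c * e / 2)^2"
    unfolding P_def R_def X_def by (simp add: algebra_simps power2_eq_square)
  hence gap: "1 / (P * R) - 1 / X^2 = (c * e / 2)^2 / (P * R * X^2)"
    using PR \<open>0 < X\<close> by (simp add: diff_frac_eq)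
  have "x * (1 / (P * R) - 1 / X^2) = (x^2 * (c * e / 2)^2) / (x * (P * R * X^2))"
    unfolding gap using x by (simp add: power2_eq_square)
  also have "\<dots> \<le> (X^2 * e) / (x * (P * R * X^2))"
    using key PR \<open>0 < X\<close> x by (intro divide_right_mono) auto
  also have "\<dots> = (e / x) / (P * R)" using PR \<open>0 < X\<close> x by (simp add: field_simps)
  finally have tangent: "x * (1 / (P * R) - 1 / X^2) \<le> (e / x) / (P * R)" .
  have "0 \<le> x * (1 / (P * R) - 1 / X^2)" using gap PR \<open>0 < X\<close> x by simp
  moreover have "k / (P * R) - x / X^2 = (k - x) / (P * R) + x * (1 / (P * R) - 1 / X^2)"
    by (simp add: field_simps diff_divide_distrib)
  ultimately have "\<bar>k / (P * R) - x / X^2\<bar> \<le> \<bar>k - x\<bar> / (P * R) + x * (1 / (P * R) - 1 / X^2)"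
    using PR abs_triangle_ineq[of "(k - x) / (P * R)" "x * (1 / (P * R) - 1 / X^2)"] by (simp add: abs_divide)
  also have "\<dots> \<le> (\<bar>k - x\<bar> + e / x) / (P * R)"
    using tangent by (simp add: add_divide_distrib)
  finally show ?thesis .
qed

lemma mobius_image_ratio_estimate:
  fixes a b c d x e k :: real
  assumes c: "0 \<le> c" and d: "1 \<le> d" and det: "\<bar>a * d - b * c\<bar> = 1"
    and x: "0 < x" and e: "0 < e" "e \<le> 2 * x" "e \<le> 2"
  defines "f \<equiv> \<lambda>t. (a * t + b) / (c * t + d)"
  shows "\<bar>measure lborel (f ` {x - e/2<..<x + e/2}) / k - x * \<bar>deriv f x\<bar>\<bar>
    \<le> (\<bar>e / k - x\<bar> + e / x) * measure lborel (f ` {x - e/2<..<x + e/2}) / e"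
proof -
  define P R X where "P = c * (x - e/2) + d" and "R = c * (x + e/2) + d" and "X = c * x + d"
  have "0 \<le> c * (x - e/2)" "0 \<le> c * x" "0 \<le> c * (x + e/2)" using c x e by simp_all
  hence pos: "0 < P" "0 < X" "0 < R" unfolding P_def X_def R_def using d by linarith+
  have "x - e/2 < x + e/2" "0 < c * (x - e/2) + d" "0 < c * (x + e/2) + d" "a * d - b * c \<noteq> 0"
    using pos e det unfolding P_def R_def by auto
  then obtain l r where "f ` {x - e/2<..<x + e/2} = {l<..<r}" "r - l = e / (P * R)"
    unfolding f_def P_def R_def by (rule mobius_image_Ioo) (use det in simp)
  moreover have "0 \<le> e / (P * R)" using pos e by simp
  ultimately have measure: "measure lborel (f ` {x - e/2<..<x + e/2}) = e / (P * R)" by simp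
  have "\<bar>deriv f x\<bar> = 1 / X^2"
    using deriv_mobius[of c x d a b] pos det unfolding f_def X_def by (simp add: abs_divide)
  thus ?thesis
    using chord_tangent_estimate[OF c d x e, of "e / k"] e
    unfolding measure P_def[symmetric] R_def[symmetric] X_def[symmetric] by (simp add: mult.commute[of k])
qed

lemma word_shape_image_measure_le:
  assumes "word_shape n h" "1 \<le> n" "0 < u" "u < v" "v \<le> 1" "S \<in> sets borel"
  shows "measure lborel (mob h ` {u<..<v} \<inter> S) \<le> (v - u) / (u * n)^2"
proof -
  obtain a b c d where h: "h = mat2 a b c d" "0 \<le> c" "1 \<le> d" "real n + 1 \<le> c + d" "\<bar>a * d - b * c\<bar> = 1"
    using assms(1) unfolding word_shape_def by blast
  have "u * n \<le> u * (c + d)" using assms(3) h(4) by (intro mult_left_mono) auto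
  also have "\<dots> \<le> c * u + d" using h(3) assms(4,5) by (simp add: algebra_simps mult_le_cancel_left1)
  finally have un: "u * n \<le> c * u + d" .
  have uv: "c * u + d \<le> c * v + d" using h(2) assms(4) by (simp add: mult_left_mono)
  have pos: "0 < u * n" using assms(2,3) by simp
  have "u < v" "0 < c * u + d" "0 < c * v + d" "a * d - b * c \<noteq> 0" using assms(4) un uv pos h(5) by auto
  then obtain l r where lr: "mob h ` {u<..<v} = {l<..<r}" "r - l = (v - u) / ((c * u + d) * (c * v + d))"
    unfolding h(1) mob_mat2 by (rule mobius_image_Ioo) (use h(5) in simp)
  have "(u * n)^2 \<le> (c * u + d) * (c * v + d)"
    unfolding power2_eq_square using un uv pos by (intro mult_mono) auto
  moreover have "0 < (u * n)^2" using pos by (simp only: zero_less_power2)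
  ultimately have "r - l \<le> (v - u) / (u * n)^2"
    unfolding lr(2) using assms(4) un uv pos by (intro divide_left_mono mult_pos_pos) auto
  moreover have "0 \<le> (v - u) / ((c * u + d) * (c * v + d))"
    using un uv pos assms(4) by (intro divide_nonneg_pos mult_pos_pos) auto
  hence "measure lborel (mob h ` {u<..<v}) = r - l" and fin: "mob h ` {u<..<v} \<in> fmeasurable lborel"
    using lr by (simp_all add: fmeasurable_def)
  moreover have "measure lborel (mob h ` {u<..<v} \<inter> S) \<le> measure lborel (mob h ` {u<..<v})"
    using fin assms(6) by (intro measure_mono_fmeasurable) auto
  ultimately show ?thesis by linarith
qed

lemma word_shape_deriv_le:
  assumes "word_shape n h" "1 \<le> n" "0 < x" "x \<le> 1"
  shows "x * \<bar>deriv (mob h) x\<bar> \<le> 1 / (x * n^2)"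
proof -
  obtain a b c d where h: "h = mat2 a b c d" "0 \<le> c" "1 \<le> d" "real n + 1 \<le> c + d" "\<bar>a * d - b * c\<bar> = 1"
    using assms(1) unfolding word_shape_def by blast
  have "x * n \<le> x * (c + d)" using assms(3) h(4) by (intro mult_left_mono) auto
  also have "\<dots> \<le> c * x + d" using h(3) assms(4) by (simp add: algebra_simps mult_le_cancel_left1)
  finally have xn: "x * n \<le> c * x + d" .
  have pos: "0 < x * n" using assms(2,3) by simp
  have "\<bar>deriv (mob h) x\<bar> = 1 / (c * x + d)^2"
    using deriv_mobius[of c x d a b] xn pos h(5) by (simp add: h(1) mob_mat2 abs_divide)
  also have "\<dots> \<le> 1 / (x * n)^2" using xn pos assms(2) by (intro divide_left_mono power_mono mult_pos_pos) auto
  finally have "x * \<bar>deriv (mob h) x\<bar> \<le> x * (1 / (x * n)^2)"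
    using assms(3) by (intro mult_left_mono) auto
  also have "x * (1 / (x * n)^2) = 1 / (x * n^2)" using assms(2,3) by (simp add: field_simps power2_eq_square)
  finally show ?thesis .
qed

lemma word_shape_image_mu_ratio_le:
  assumes "word_shape n h" "1 \<le> n" "0 \<le> u" "u < v" "v \<le> 1" "S \<in> sets borel"
  shows "measure lborel (mob h ` {u<..<v} \<inter> S) / measure mu {u<..<v}
    \<le> (v - u) / (u^2 * measure mu {u<..<v}) / n^2"
proof (cases "u = 0")
  case True
  \<comment> \<open>\<open>mu\<close> gives \<open>{0<..<v}\<close> infinite measure, so \<open>measure\<close> returns 0 and both sides vanish\<close>
  thus ?thesis using assms(4) by (simp add: measure_mu_Ioo_0)
next
  case False
  hence "measure lborel (mob h ` {u<..<v} \<inter> S) \<le> (v - u) / (u * n)^2"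
    using assms by (intro word_shape_image_measure_le) auto
  hence "measure lborel (mob h ` {u<..<v} \<inter> S) / measure mu {u<..<v}
      \<le> (v - u) / (u * n)^2 / measure mu {u<..<v}"
    by (intro divide_right_mono) auto
  thus ?thesis by (simp add: power_mult_distrib mult_ac)
qed

lemma word_shape_image_ratio_estimate:
  assumes "word_shape n h" "0 < x" "0 < e" "e \<le> 2 * x" "e \<le> 2"
  shows "\<bar>measure lborel (mob h ` {x - e/2<..<x + e/2}) / k - x * \<bar>deriv (mob h) x\<bar>\<bar>
    \<le> (\<bar>e / k - x\<bar> + e / x) * measure lborel (mob h ` {x - e/2<..<x + e/2}) / e"
proof -
  obtain a b c d where "h = mat2 a b c d" "0 \<le> c" "1 \<le> d" "\<bar>a * d - b * c\<bar> = 1"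
    using assms(1) unfolding word_shape_def by blast
  thus ?thesis using mobius_image_ratio_estimate[of c d a b x e] assms(2-) by (simp add: mob_mat2)
qed

lemma word_shape_restricted_image_estimate:
  assumes "word_shape n h" "1 \<le> n" "0 < x" "0 < e" "0 \<le> x - e/2" "x + e/2 \<le> 1"
  defines "V \<equiv> {x - e/2<..<x + e/2}"
  shows "\<bar>measure lborel (mob h ` V \<inter> {0<..y}) / measure mu V
      - x * \<bar>deriv (mob h) x\<bar> * indicator {0<..y} (mob h x)\<bar>
    \<le> (e / ((x - e/2)^2 * measure mu V) + 1 / x) / n^2"
proof -
  have "0 \<le> measure lborel (mob h ` V \<inter> {0<..y}) / measure mu V" "0 \<le> x * \<bar>deriv (mob h) x\<bar>"
    using assms(3) by simp_all
  hence "\<bar>measure lborel (mob h ` V \<inter> {0<..y}) / measure mu V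
      - x * \<bar>deriv (mob h) x\<bar> * indicator {0<..y} (mob h x)\<bar>
    \<le> measure lborel (mob h ` V \<inter> {0<..y}) / measure mu V + x * \<bar>deriv (mob h) x\<bar>"
    by (auto simp: indicator_def abs_le_iff)
  also have "\<dots> \<le> e / ((x - e/2)^2 * measure mu V) / n^2 + 1 / (x * n^2)"
    using word_shape_image_mu_ratio_le[OF assms(1,2,5), of "x + e/2" "{0<..y}"]
      word_shape_deriv_le[OF assms(1-3)] assms(4,6) unfolding V_def by (intro add_mono) auto
  finally show ?thesis by (simp add: add_divide_distrib)
qed

theorem lemma4p6:
  fixes q :: nat and x \<epsilon> :: real
  assumes "odd q" and "q \<ge> 3"
    and "0 < x" and "x < 1" and "\<epsilon> > 0"
    and "{x - \<epsilon>/2 <..< x + \<epsilon>/2} \<subseteq> {0<..<1}"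
  shows "(\<forall>n \<ge> 1. \<forall>h \<in> W q n.
            \<bar>measure lborel (mob h ` {x - \<epsilon>/2 <..< x + \<epsilon>/2}) / measure mu {x - \<epsilon>/2 <..< x + \<epsilon>/2}
              - x * \<bar>deriv (mob h) x\<bar>\<bar>
            \<le> (\<bar>\<epsilon> / measure mu {x - \<epsilon>/2 <..< x + \<epsilon>/2} - x\<bar> + \<epsilon> / x)
               * measure lborel (mob h ` {x - \<epsilon>/2 <..< x + \<epsilon>/2}) / \<epsilon>)
       \<and> (\<exists>M > 0. \<forall>y \<in> {0<..1}. \<forall>n \<ge> 1. \<forall>h \<in> W q n.
            y \<in> mob h ` {x - \<epsilon>/2 <..< x + \<epsilon>/2} \<longrightarrow>
            \<bar>measure lborel (mob h ` {x - \<epsilon>/2 <..< x + \<epsilon>/2} \<inter> {0<..y}) / measure mu {x - \<epsilon>/2 <..< x + \<epsilon>/2}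
              - x * \<bar>deriv (mob h) x\<bar> * indicator {0<..y} (mob h x)\<bar>
            \<le> M / (real n)^2)"
proof -
  have "{x - \<epsilon>/2 <..< x + \<epsilon>/2} \<subseteq> {0<..<1}" "x - \<epsilon>/2 < x + \<epsilon>/2" using assms(5,6) by simp_all
  hence V: "0 \<le> x - \<epsilon>/2" "x + \<epsilon>/2 \<le> 1"
    by (simp_all add: greaterThanLessThan_subseteq_greaterThanLessThan)
  have shape: "word_shape n h" if "h \<in> W q n" for n h
    using W_word_shape[OF assms(2) that] .
  \<comment> \<open>Neither the oddness of \<open>q\<close> nor the hypothesis \<open>y \<in> h.V\<^sub>\<epsilon>\<close> of (ii) is needed.\<close>
  show ?thesis
  proof (intro conjI allI impI ballI exI)
    fix n h assume "h \<in> W q n"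
    thus "\<bar>measure lborel (mob h ` {x - \<epsilon>/2 <..< x + \<epsilon>/2}) / measure mu {x - \<epsilon>/2 <..< x + \<epsilon>/2}
        - x * \<bar>deriv (mob h) x\<bar>\<bar>
      \<le> (\<bar>\<epsilon> / measure mu {x - \<epsilon>/2 <..< x + \<epsilon>/2} - x\<bar> + \<epsilon> / x)
        * measure lborel (mob h ` {x - \<epsilon>/2 <..< x + \<epsilon>/2}) / \<epsilon>"
      using word_shape_image_ratio_estimate[OF shape] assms(3-5) V by simp
  next
    show "0 < \<epsilon> / ((x - \<epsilon>/2)^2 * measure mu {x - \<epsilon>/2 <..< x + \<epsilon>/2}) + 1 / x"
      using assms(3,5) by (simp add: add_nonneg_pos)
  next
    fix y n h assume "1 \<le> n" "h \<in> W q n"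
    thus "\<bar>measure lborel (mob h ` {x - \<epsilon>/2 <..< x + \<epsilon>/2} \<inter> {0<..y}) / measure mu {x - \<epsilon>/2 <..< x + \<epsilon>/2}
        - x * \<bar>deriv (mob h) x\<bar> * indicator {0<..y} (mob h x)\<bar>
      \<le> (\<epsilon> / ((x - \<epsilon>/2)^2 * measure mu {x - \<epsilon>/2 <..< x + \<epsilon>/2}) + 1 / x) / (real n)^2"
      using word_shape_restricted_image_estimate[OF shape] assms(3,5) V by simp
  qed
qed

end
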